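(* Let $\gamma$, $r$ be as in the context, fix $s_0$, and let $\epsilon>0$ be a sufficiently small number. Let $F:A_{s_0,\epsilon}\to\mathbb{R}$ be a $C^\infty$ function such that for every $s$ with $|s-s_0|<\epsilon$ the restriction of $F$ to the circle $C_s$ coincides with the restriction to $C_s$ of some polynomial $F_s$ in two variables of degree at most $N$. Then $F$ is (the restriction of) a polynomial in $x_1,x_2$ of degree at most $2N$.
   Context: $\gamma$ is a smooth simple closed curve in $\mathbb{R}^2$ parametrized by arc length $s$, $r>0$ is less than half of the maximal radius of a tubular neighbourhood of $\gamma$. For each $s$, $C_s=\{x:|x-\gamma(s)|=r\}$, and $A_{s_0,\epsilon}=\bigcup_{s:|s-s_0|\le\epsilon}C_s$. *)

theory Defs
  imports "HOL-Analysis.Analysis"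
begin

fun Ck_on :: "nat \<Rightarrow> 'a::euclidean_space set \<Rightarrow> ('a \<Rightarrow> 'b::real_normed_vector) \<Rightarrow> bool" where
  "Ck_on 0 U f = continuous_on U f"
| "Ck_on (Suc k) U f = (f differentiable_on U \<and> continuous_on U f \<and>
      (\<forall>b\<in>Basis. Ck_on k U (\<lambda>x. frechet_derivative f (at x) b)))"

definition smooth_on :: "'a::euclidean_space set \<Rightarrow> ('a \<Rightarrow> 'b::real_normed_vector) \<Rightarrow> bool" where
  "smooth_on U f \<longleftrightarrow> open U \<and> (\<forall>k. Ck_on k U f)"

definition smooth_on_set :: "'a::euclidean_space set \<Rightarrow> ('a \<Rightarrow> 'b::real_normed_vector) \<Rightarrow> bool" where
  "smooth_on_set A f \<longleftrightarrow> (\<exists>U g. open U \<and> A \<subseteq> U \<and> smooth_on U g \<and> (\<forall>x\<in>A. g x = f x))"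

definition arclength_simple_closed_curve :: "(real \<Rightarrow> real \<times> real) \<Rightarrow> real \<Rightarrow> bool" where
  "arclength_simple_closed_curve \<gamma> L \<longleftrightarrow> L > 0 \<and> smooth_on UNIV \<gamma> \<and>
     (\<forall>s. \<gamma> (s + L) = \<gamma> s) \<and> inj_on \<gamma> {0..<L} \<and>
     (\<forall>s. norm (vector_derivative \<gamma> (at s)) = 1)"

definition unit_tangent :: "(real \<Rightarrow> real \<times> real) \<Rightarrow> real \<Rightarrow> real \<times> real" where
  "unit_tangent \<gamma> s = vector_derivative \<gamma> (at s)"

definition unit_normal :: "(real \<Rightarrow> real \<times> real) \<Rightarrow> real \<Rightarrow> real \<times> real" where
  "unit_normal \<gamma> s = (- snd (unit_tangent \<gamma> s), fst (unit_tangent \<gamma> s))"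

definition curvature :: "(real \<Rightarrow> real \<times> real) \<Rightarrow> real \<Rightarrow> real" where
  "curvature \<gamma> s = vector_derivative (unit_tangent \<gamma>) (at s) \<bullet> unit_normal \<gamma> s"

text \<open>rho is the radius of a tubular neighbourhood of the closed curve of length L:
  the normal map (s,t) \<mapsto> gamma s + t nu(s) is injective on [0,L) \<times> (-rho,rho) and a local
  diffeomorphism there (its Jacobian 1 - t kappa(s) does not vanish).\<close>
definition tubular_radius :: "(real \<Rightarrow> real \<times> real) \<Rightarrow> real \<Rightarrow> real \<Rightarrow> bool" where
  "tubular_radius \<gamma> L \<rho> \<longleftrightarrow> \<rho> > 0 \<and>
     inj_on (\<lambda>(s, t). \<gamma> s + t *\<^sub>R unit_normal \<gamma> s) ({0..<L} \<times> {-\<rho><..<\<rho>}) \<and>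
     (\<forall>s t. \<bar>t\<bar> < \<rho> \<longrightarrow> 1 - t * curvature \<gamma> s \<noteq> 0)"

definition circ :: "(real \<Rightarrow> real \<times> real) \<Rightarrow> real \<Rightarrow> real \<Rightarrow> (real \<times> real) set" where
  "circ \<gamma> r s = {x. dist x (\<gamma> s) = r}"

definition Aset :: "(real \<Rightarrow> real \<times> real) \<Rightarrow> real \<Rightarrow> real \<Rightarrow> real \<Rightarrow> (real \<times> real) set" where
  "Aset \<gamma> r s0 \<epsilon> = (\<Union>s\<in>{s. \<bar>s - s0\<bar> \<le> \<epsilon>}. circ \<gamma> r s)"

definition poly2 :: "nat \<Rightarrow> (nat \<Rightarrow> nat \<Rightarrow> real) \<Rightarrow> real \<times> real \<Rightarrow> real" where
  "poly2 N c x = (\<Sum>i\<le>N. \<Sum>j\<le>N - i. c i j * fst x ^ i * snd x ^ j)"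

definition is_poly2 :: "nat \<Rightarrow> (real \<times> real \<Rightarrow> real) \<Rightarrow> bool" where
  "is_poly2 N P \<longleftrightarrow> (\<exists>c. \<forall>x. P x = poly2 N c x)"

end

theory Submission
  imports Defs "HOL-Computational_Algebra.Polynomial"
begin

text \<open>
  Identify the plane with \<open>\<complex>\<close> and parametrise the circle of radius \<open>r\<close> about \<open>c\<close> by \<open>c + r w\<close>,
  \<open>\<bar>w\<bar> = 1\<close>. There a polynomial of degree \<open>N\<close> becomes a trigonometric polynomial of degree \<open>N\<close>,
  i.e. \<open>w ^ N\<close> times it is a polynomial of degree \<open>2 N\<close> in \<open>w\<close>, so it is determined by its values
  at \<open>2 N + 1\<close> points.

  For small \<open>\<epsilon>\<close> any two of the circles \<open>C\<^sub>s\<close>, \<open>\<bar>s - s0\<bar> < \<epsilon>\<close>, meet in two points and no three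
  of them have a common point. Pick \<open>N + 1\<close> of them. A polynomial \<open>P\<close> of degree \<open>2 N\<close> that agrees
  with \<open>F\<close> on all of them is built one circle at a time: on the \<open>k\<close>-th circle the error \<open>F\<^sub>s - P\<close>
  vanishes at its \<open>2 k\<close> intersections with the previous circles, hence is divisible by the product
  of their equations, and the quotient extends to a polynomial of degree \<open>N - k\<close>. Any other
  circle \<open>C\<^sub>s\<close> meets the chosen ones in \<open>2 N + 2\<close> points, where \<open>F\<^sub>s - P\<close> vanishes, so \<open>F = P\<close>
  on \<open>C\<^sub>s\<close>; the circles with \<open>\<bar>s - s0\<bar> = \<epsilon>\<close> follow by continuity.
\<close>

section \<open>Polynomials in two variables\<close>

lemma is_poly2_sum_monomials:
  fixes K :: "'k set"
  assumes "finite K" and deg: "\<And>k. k \<in> K \<Longrightarrow> a k + b k \<le> n"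
    and f: "\<And>x. f x = (\<Sum>k\<in>K. e k * fst x ^ a k * snd x ^ b k)"
  shows "is_poly2 n f"
proof -
  define T where "T = Sigma {..n} (\<lambda>i. {..n - i})"
  define c where "c i j = (\<Sum>k\<in>{k\<in>K. (a k, b k) = (i, j)}. e k)" for i j
  have "f x = poly2 n c x" for x
  proof -
    have "poly2 n c x = (\<Sum>(i, j)\<in>T. c i j * fst x ^ i * snd x ^ j)"
      unfolding poly2_def T_def by (simp add: sum.Sigma)
    also have "\<dots> = (\<Sum>y\<in>T. \<Sum>k\<in>{k\<in>K. (a k, b k) = y}. e k * fst x ^ a k * snd x ^ b k)"
      unfolding c_def by (auto simp: sum_distrib_right intro!: sum.cong)
    also have "\<dots> = f x"
      unfolding f using deg by (intro sum.group \<open>finite K\<close>) (force simp: T_def)+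
    finally show ?thesis ..
  qed
  then show ?thesis unfolding is_poly2_def by blast
qed

lemma is_poly2_monomialsE:
  assumes "is_poly2 n f"
  obtains K :: "(nat \<times> nat) set" and e a b where "finite K" "\<And>k. k \<in> K \<Longrightarrow> a k + b k \<le> n"
    "\<And>x. f x = (\<Sum>k\<in>K. e k * fst x ^ a k * snd x ^ b k)"
proof -
  obtain c where c: "\<And>x. f x = poly2 n c x" using assms unfolding is_poly2_def by blast
  show ?thesis
    by (rule that[of "Sigma {..n} (\<lambda>i. {..n - i})" fst snd "\<lambda>(i, j). c i j"])
       (auto simp: c poly2_def sum.Sigma split_beta)
qed

lemma is_poly2_mono: "is_poly2 m f \<Longrightarrow> m \<le> n \<Longrightarrow> is_poly2 n f"
  by (elim is_poly2_monomialsE, rule is_poly2_sum_monomials) (auto intro: le_trans)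

lemma is_poly2_const: "is_poly2 n (\<lambda>x. a)"
  by (rule is_poly2_sum_monomials[of "{()}" "\<lambda>_. 0" "\<lambda>_. 0" _ _ "\<lambda>_. a"]) auto

lemma is_poly2_fst: "is_poly2 1 fst"
  by (rule is_poly2_sum_monomials[of "{()}" "\<lambda>_. 1" "\<lambda>_. 0" _ _ "\<lambda>_. 1"]) auto

lemma is_poly2_snd: "is_poly2 1 snd"
  by (rule is_poly2_sum_monomials[of "{()}" "\<lambda>_. 0" "\<lambda>_. 1" _ _ "\<lambda>_. 1"]) auto

lemma is_poly2_add: "is_poly2 n f \<Longrightarrow> is_poly2 n g \<Longrightarrow> is_poly2 n (\<lambda>x. f x + g x)"
  unfolding is_poly2_def
proof (elim exE)
  fix c d assume "\<forall>x. f x = poly2 n c x" "\<forall>x. g x = poly2 n d x"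
  then show "\<exists>e. \<forall>x. f x + g x = poly2 n e x"
    by (intro exI[of _ "\<lambda>i j. c i j + d i j"]) (simp add: poly2_def distrib_right sum.distrib)
qed

lemma is_poly2_mult:
  assumes "is_poly2 m f" "is_poly2 n g"
  shows "is_poly2 (m + n) (\<lambda>x. f x * g x)"
proof -
  obtain K1 :: "(nat \<times> nat) set" and e1 a1 b1 where 1: "finite K1" "\<And>k. k \<in> K1 \<Longrightarrow> a1 k + b1 k \<le> m"
    "\<And>x. f x = (\<Sum>k\<in>K1. e1 k * fst x ^ a1 k * snd x ^ b1 k)"
    by (rule is_poly2_monomialsE[OF assms(1)], rule that)
  obtain K2 :: "(nat \<times> nat) set" and e2 a2 b2 where 2: "finite K2" "\<And>k. k \<in> K2 \<Longrightarrow> a2 k + b2 k \<le> n"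
    "\<And>x. g x = (\<Sum>k\<in>K2. e2 k * fst x ^ a2 k * snd x ^ b2 k)"
    by (rule is_poly2_monomialsE[OF assms(2)], rule that)
  show ?thesis
  proof (rule is_poly2_sum_monomials[of "K1 \<times> K2" "\<lambda>(k, l). a1 k + a2 l" "\<lambda>(k, l). b1 k + b2 l"
        _ _ "\<lambda>(k, l). e1 k * e2 l"])
    show "f x * g x = (\<Sum>kl\<in>K1 \<times> K2. (case kl of (k, l) \<Rightarrow> e1 k * e2 l) *
        fst x ^ (case kl of (k, l) \<Rightarrow> a1 k + a2 l) * snd x ^ (case kl of (k, l) \<Rightarrow> b1 k + b2 l))" for x
      unfolding 1(3) 2(3) sum_product sum.cartesian_product by (rule sum.cong) (auto simp: power_add)
  qed (use 1 2 in fastforce)+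
qed

lemma is_poly2_scale: "is_poly2 n f \<Longrightarrow> is_poly2 n (\<lambda>x. a * f x)"
  using is_poly2_mult[OF is_poly2_const[of 0 a]] by simp

lemma is_poly2_diff: "is_poly2 n f \<Longrightarrow> is_poly2 n g \<Longrightarrow> is_poly2 n (\<lambda>x. f x - g x)"
  using is_poly2_add[of n f "\<lambda>x. (-1) * g x"] is_poly2_scale[of n g "-1"] by simp

lemma is_poly2_sum:
  "finite S \<Longrightarrow> (\<And>i. i \<in> S \<Longrightarrow> is_poly2 n (f i)) \<Longrightarrow> is_poly2 n (\<lambda>x. \<Sum>i\<in>S. f i x)"
  by (induction S rule: finite_induct) (auto intro: is_poly2_add is_poly2_const)

lemma is_poly2_prod:
  "finite S \<Longrightarrow> (\<And>i. i \<in> S \<Longrightarrow> is_poly2 n (f i)) \<Longrightarrow> is_poly2 (card S * n) (\<lambda>x. \<Prod>i\<in>S. f i x)"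
  by (induction S rule: finite_induct) (auto intro: is_poly2_const dest: is_poly2_mult)

lemma is_poly2_power: "is_poly2 n f \<Longrightarrow> is_poly2 (k * n) (\<lambda>x. f x ^ k)"
  using is_poly2_prod[of "{..<k}" n "\<lambda>_. f"] by simp

lemma is_poly2_continuous_on: "is_poly2 n P \<Longrightarrow> continuous_on S P"
  unfolding is_poly2_def poly2_def
proof (elim exE)
  fix c assume "\<forall>x. P x = (\<Sum>i\<le>n. \<Sum>j\<le>n - i. c i j * fst x ^ i * snd x ^ j)"
  then have "P = (\<lambda>x. \<Sum>i\<le>n. \<Sum>j\<le>n - i. c i j * fst x ^ i * snd x ^ j)" by auto
  then show "continuous_on S P" by (simp add: continuous_intros)
qed

section \<open>Trigonometric polynomials on circles\<close>

definition circle_point :: "real \<times> real \<Rightarrow> real \<Rightarrow> complex \<Rightarrow> real \<times> real" where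
  "circle_point c r w = (fst c + r * Re w, snd c + r * Im w)"

text \<open>Since \<open>cnj w = 1 / w\<close> on the unit circle, a trigonometric polynomial of degree \<open>n\<close> in
  \<open>arg w\<close>, multiplied by \<open>w ^ n\<close>, is a polynomial of degree \<open>2 * n\<close> in \<open>w\<close>.\<close>
definition circle_trig_poly :: "nat \<Rightarrow> real \<times> real \<Rightarrow> real \<Rightarrow> (real \<times> real \<Rightarrow> real) \<Rightarrow> bool" where
  "circle_trig_poly n c r f \<longleftrightarrow> (\<exists>p. degree p \<le> 2 * n \<and>
     (\<forall>w. cmod w = 1 \<longrightarrow> complex_of_real (f (circle_point c r w)) * w ^ n = poly p w))"

lemma cnj_mult_unit: "cmod w = 1 \<Longrightarrow> cnj w * w = 1"
  by (metis complex_norm_square mult.commute of_real_1 power_one)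

lemma circle_trig_poly_const: "circle_trig_poly n c r (\<lambda>x. a)"
  unfolding circle_trig_poly_def
  by (rule exI[of _ "monom (complex_of_real a) n"]) (auto simp: poly_monom intro: order_trans[OF degree_monom_le])

lemma circle_trig_poly_mono:
  assumes "circle_trig_poly m c r f" "m \<le> n"
  shows "circle_trig_poly n c r f"
proof -
  obtain p where p: "degree p \<le> 2 * m"
    "\<And>w. cmod w = 1 \<Longrightarrow> complex_of_real (f (circle_point c r w)) * w ^ m = poly p w"
    using assms(1) unfolding circle_trig_poly_def by blast
  have "degree (p * monom 1 (n - m)) \<le> 2 * n"
    using p(1) assms(2) degree_monom_le[of "1::complex" "n - m"]
    by (intro order_trans[OF degree_mult_le]) auto
  moreover have "complex_of_real (f (circle_point c r w)) * w ^ n = poly (p * monom 1 (n - m)) w"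
    if "cmod w = 1" for w
  proof -
    have "w ^ n = w ^ m * w ^ (n - m)" using assms(2) by (simp flip: power_add)
    then show ?thesis using p(2)[OF that] by (simp add: poly_monom flip: mult.assoc)
  qed
  ultimately show ?thesis unfolding circle_trig_poly_def by blast
qed

lemma circle_trig_poly_add:
  assumes "circle_trig_poly n c r f" "circle_trig_poly n c r g"
  shows "circle_trig_poly n c r (\<lambda>x. f x + g x)"
proof -
  obtain p q where "degree p \<le> 2 * n" "degree q \<le> 2 * n"
    "\<And>w. cmod w = 1 \<Longrightarrow> complex_of_real (f (circle_point c r w)) * w ^ n = poly p w"
    "\<And>w. cmod w = 1 \<Longrightarrow> complex_of_real (g (circle_point c r w)) * w ^ n = poly q w"
    using assms unfolding circle_trig_poly_def by meson
  then show ?thesis unfolding circle_trig_poly_def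
    by (intro exI[of _ "p + q"]) (auto simp: distrib_right degree_add_le)
qed

lemma circle_trig_poly_mult:
  assumes "circle_trig_poly m c r f" "circle_trig_poly n c r g"
  shows "circle_trig_poly (m + n) c r (\<lambda>x. f x * g x)"
proof -
  obtain p q where "degree p \<le> 2 * m" "degree q \<le> 2 * n"
    "\<And>w. cmod w = 1 \<Longrightarrow> complex_of_real (f (circle_point c r w)) * w ^ m = poly p w"
    "\<And>w. cmod w = 1 \<Longrightarrow> complex_of_real (g (circle_point c r w)) * w ^ n = poly q w"
    using assms unfolding circle_trig_poly_def by meson
  then show ?thesis unfolding circle_trig_poly_def
    by (intro exI[of _ "p * q"])
       (auto simp: power_add mult_ac intro: order_trans[OF degree_mult_le] simp flip: poly_mult)
qed

lemma circle_trig_poly_diff: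
  "circle_trig_poly n c r f \<Longrightarrow> circle_trig_poly n c r g \<Longrightarrow> circle_trig_poly n c r (\<lambda>x. f x - g x)"
  using circle_trig_poly_add[of n c r f "\<lambda>x. (-1) * g x"]
    circle_trig_poly_mult[OF circle_trig_poly_const[of 0 c r "-1"], of n g] by simp

lemma circle_trig_poly_sum:
  "finite S \<Longrightarrow> (\<And>i. i \<in> S \<Longrightarrow> circle_trig_poly n c r (f i)) \<Longrightarrow>
    circle_trig_poly n c r (\<lambda>x. \<Sum>i\<in>S. f i x)"
  by (induction S rule: finite_induct) (auto intro: circle_trig_poly_add circle_trig_poly_const)

lemma circle_trig_poly_prod:
  "finite S \<Longrightarrow> (\<And>i. i \<in> S \<Longrightarrow> circle_trig_poly n c r (f i)) \<Longrightarrow>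
    circle_trig_poly (card S * n) c r (\<lambda>x. \<Prod>i\<in>S. f i x)"
  by (induction S rule: finite_induct) (auto intro: circle_trig_poly_const dest: circle_trig_poly_mult)

lemma circle_trig_poly_power: "circle_trig_poly n c r f \<Longrightarrow> circle_trig_poly (k * n) c r (\<lambda>x. f x ^ k)"
  using circle_trig_poly_prod[of "{..<k}" n c r "\<lambda>_. f"] by simp

lemma circle_trig_poly_fst: "circle_trig_poly 1 c r fst"
proof -
  define p where "p = [: complex_of_real (r / 2), complex_of_real (fst c), complex_of_real (r / 2) :]"
  have "complex_of_real (fst (circle_point c r w)) * w ^ 1 = poly p w" if "cmod w = 1" for w
  proof -
    have Re: "complex_of_real (Re w) * w = (w ^ 2 + 1) / 2"
      using cnj_mult_unit[OF that] by (simp add: complex_eq_iff power2_eq_square algebra_simps)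
    have "complex_of_real (fst (circle_point c r w)) * w ^ 1 =
        complex_of_real (fst c) * w + complex_of_real r * (complex_of_real (Re w) * w)"
      unfolding circle_point_def by (simp add: algebra_simps)
    then show ?thesis unfolding Re p_def by (simp add: algebra_simps power2_eq_square)
  qed
  moreover have "degree p \<le> 2 * 1" unfolding p_def by simp
  ultimately show ?thesis unfolding circle_trig_poly_def by blast
qed

lemma circle_trig_poly_snd: "circle_trig_poly 1 c r snd"
proof -
  define p where "p = [: \<i> * complex_of_real (r / 2), complex_of_real (snd c), - \<i> * complex_of_real (r / 2) :]"
  have "complex_of_real (snd (circle_point c r w)) * w ^ 1 = poly p w" if "cmod w = 1" for w
  proof -
    have Im: "complex_of_real (Im w) * w = - \<i> * (w ^ 2 - 1) / 2"
      using cnj_mult_unit[OF that] by (simp add: complex_eq_iff power2_eq_square algebra_simps)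
    have "complex_of_real (snd (circle_point c r w)) * w ^ 1 =
        complex_of_real (snd c) * w + complex_of_real r * (complex_of_real (Im w) * w)"
      unfolding circle_point_def by (simp add: algebra_simps)
    then show ?thesis unfolding Im p_def by (simp add: field_simps power2_eq_square)
  qed
  moreover have "degree p \<le> 2 * 1" unfolding p_def by simp
  ultimately show ?thesis unfolding circle_trig_poly_def by blast
qed

lemma circle_trig_poly_of_poly2:
  assumes "is_poly2 n f"
  shows "circle_trig_poly n c r f"
proof -
  obtain K :: "(nat \<times> nat) set" and e a b where K: "finite K" "\<And>k. k \<in> K \<Longrightarrow> a k + b k \<le> n"
    "\<And>x. f x = (\<Sum>k\<in>K. e k * fst x ^ a k * snd x ^ b k)"
    by (rule is_poly2_monomialsE[OF assms], rule that)
  have "circle_trig_poly n c r (\<lambda>x. e k * fst x ^ a k * snd x ^ b k)" if "k \<in> K" for k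
  proof (rule circle_trig_poly_mono)
    show "circle_trig_poly (0 + a k * 1 + b k * 1) c r (\<lambda>x. e k * fst x ^ a k * snd x ^ b k)"
      by (intro circle_trig_poly_mult circle_trig_poly_const circle_trig_poly_power
          circle_trig_poly_fst circle_trig_poly_snd)
  qed (use K(2)[OF that] in simp)
  then have "circle_trig_poly n c r (\<lambda>x. \<Sum>k\<in>K. e k * fst x ^ a k * snd x ^ b k)"
    by (intro circle_trig_poly_sum K(1))
  moreover have "f = (\<lambda>x. \<Sum>k\<in>K. e k * fst x ^ a k * snd x ^ b k)" using K(3) by (rule ext)
  ultimately show ?thesis by simp
qed

lemma circle_trig_poly_eq_0:
  assumes "circle_trig_poly n c r f" "finite W" "card W > 2 * n"
    and "\<And>v. v \<in> W \<Longrightarrow> cmod v = 1 \<and> f (circle_point c r v) = 0" and "cmod w = 1"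
  shows "f (circle_point c r w) = 0"
proof -
  obtain p where p: "degree p \<le> 2 * n"
    "\<And>w. cmod w = 1 \<Longrightarrow> complex_of_real (f (circle_point c r w)) * w ^ n = poly p w"
    using assms(1) unfolding circle_trig_poly_def by blast
  have "p = 0"
  proof (rule ccontr)
    assume "p \<noteq> 0"
    have "W \<subseteq> {x. poly p x = 0}" using assms(4) p(2) by force
    then have "card W \<le> card {x. poly p x = 0}" by (intro card_mono poly_roots_finite \<open>p \<noteq> 0\<close>)
    also have "\<dots> \<le> degree p" by (rule card_poly_roots_bound[OF \<open>p \<noteq> 0\<close>])
    finally show False using p(1) assms(3) by linarith
  qed
  then show ?thesis using p(2)[OF assms(5)] assms(5) by auto
qed

lemma dist_eq_cmod: "dist x y = cmod (Complex (fst x - fst y) (snd x - snd y))"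
  by (cases x; cases y) (simp add: dist_Pair_Pair dist_real_def cmod_def power2_abs)

lemma dist_circle_point: "r \<ge> 0 \<Longrightarrow> dist (circle_point c r w) c = r * cmod w"
proof -
  have "Complex (r * Re w) (r * Im w) = complex_of_real r * w" by (simp add: complex_eq_iff)
  then show "r \<ge> 0 \<Longrightarrow> dist (circle_point c r w) c = r * cmod w"
    unfolding dist_eq_cmod circle_point_def by (simp add: norm_mult)
qed

lemma circle_point_in_sphere: "r \<ge> 0 \<Longrightarrow> cmod w = 1 \<Longrightarrow> circle_point c r w \<in> sphere c r"
  using dist_circle_point[of r c w] by (simp add: dist_commute)

lemma sphere_circle_pointE:
  assumes "r > 0" "x \<in> sphere c r"
  obtains w where "cmod w = 1" "x = circle_point c r w"
proof
  define w where "w = Complex ((fst x - fst c) / r) ((snd x - snd c) / r)"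
  have "w = Complex (fst x - fst c) (snd x - snd c) / complex_of_real r"
    unfolding w_def by (simp add: complex_eq_iff Re_divide Im_divide power2_eq_square)
  moreover have "dist x c = r" using assms(2) by (simp add: dist_commute)
  ultimately show "cmod w = 1" using assms(1) by (simp add: dist_eq_cmod norm_divide)
  show "x = circle_point c r w" using assms(1) unfolding w_def circle_point_def by (cases x) simp
qed

lemma circles_intersect_twice:
  assumes "r > 0" and "0 < dist c c'" "dist c c' < 2 * r"
  obtains w1 w2 where "w1 \<noteq> w2" "cmod w1 = 1" "cmod w2 = 1"
    "circle_point c r w1 \<in> sphere c' r" "circle_point c r w2 \<in> sphere c' r"
proof -
  define D where "D = Complex (fst c' - fst c) (snd c' - snd c)"
  define \<delta> where "\<delta> = dist c c'"
  have "\<delta> = cmod D" unfolding \<delta>_def D_def dist_eq_cmod by (simp add: cmod_def power2_commute)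
  then have "D \<noteq> 0" using assms(2) unfolding \<delta>_def by auto
  define u where "u = D / complex_of_real \<delta>"
  have u: "cmod u = 1" "u * complex_of_real \<delta> = D"
    using \<open>D \<noteq> 0\<close> unfolding u_def \<open>\<delta> = cmod D\<close> by (simp_all add: norm_divide)
  define s where "s = sqrt (1 - \<delta>\<^sup>2 / (4 * r\<^sup>2))"
  have "\<delta>\<^sup>2 < (2 * r)\<^sup>2" using assms unfolding \<delta>_def by (intro power_strict_mono) auto
  then have "\<delta>\<^sup>2 / (4 * r\<^sup>2) < 1" using assms(1) by (simp add: divide_less_eq power_mult_distrib)
  then have "s > 0" "s\<^sup>2 = 1 - \<delta>\<^sup>2 / (4 * r\<^sup>2)" unfolding s_def by simp_all
  \<comment> \<open>the two intersection points, in the frame where \<open>c' - c\<close> is the positive real axis\<close>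
  define w where "w t = u * Complex (\<delta> / (2 * r)) t" for t
  have "cmod (w t) = 1 \<and> circle_point c r (w t) \<in> sphere c' r" if "t = s \<or> t = - s" for t
  proof
    have "(\<delta> / (2 * r))\<^sup>2 + t\<^sup>2 = 1" using that \<open>s\<^sup>2 = _\<close> assms(1) by (auto simp: power2_eq_square field_simps)
    then show "cmod (w t) = 1" unfolding w_def norm_mult u by (simp add: cmod_def)
    have "complex_of_real r * w t - D = u * Complex (- \<delta> / 2) (r * t)"
      unfolding w_def u(2)[symmetric] using assms(1) by (simp add: complex_eq_iff algebra_simps)
    moreover have "(\<delta> / 2)\<^sup>2 + (r * t)\<^sup>2 = r\<^sup>2"
      using that \<open>s\<^sup>2 = _\<close> assms(1) by (auto simp: power2_eq_square field_simps)
    then have "cmod (Complex (- \<delta> / 2) (r * t)) = r" using assms(1) by (simp add: complex_norm)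
    ultimately have "cmod (complex_of_real r * w t - D) = r" by (simp only: norm_mult u)
    moreover have "Complex (fst (circle_point c r (w t)) - fst c') (snd (circle_point c r (w t)) - snd c') =
        complex_of_real r * w t - D"
      unfolding circle_point_def D_def by (simp add: complex_eq_iff)
    ultimately have "dist (circle_point c r (w t)) c' = r" by (simp add: dist_eq_cmod)
    then show "circle_point c r (w t) \<in> sphere c' r" by (simp add: dist_commute)
  qed
  moreover have "w s \<noteq> w (- s)" using \<open>s > 0\<close> u(1) unfolding w_def by (auto simp: complex_eq_iff cmod_def)
  ultimately show ?thesis using that by blast
qed

definition circle_equation :: "real \<times> real \<Rightarrow> real \<Rightarrow> real \<times> real \<Rightarrow> real" where
  "circle_equation c r x = (fst x - fst c)\<^sup>2 + (snd x - snd c)\<^sup>2 - r\<^sup>2"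

lemma circle_equation_eq_0_iff: "r \<ge> 0 \<Longrightarrow> circle_equation c r x = 0 \<longleftrightarrow> x \<in> sphere c r"
proof -
  have "dist c x ^ 2 = (fst x - fst c)\<^sup>2 + (snd x - snd c)\<^sup>2"
    unfolding dist_eq_cmod cmod_def by (simp add: power2_commute)
  then show "r \<ge> 0 \<Longrightarrow> ?thesis" unfolding circle_equation_def by (auto simp: power2_eq_iff_nonneg)
qed

lemma is_poly2_circle_equation: "is_poly2 2 (circle_equation c r)"
proof -
  have "is_poly2 1 (\<lambda>x. fst x - fst c)" "is_poly2 1 (\<lambda>x. snd x - snd c)"
    by (intro is_poly2_diff is_poly2_fst is_poly2_snd is_poly2_const)+
  from this[THEN is_poly2_power[of 1 _ 2]] show ?thesis
    unfolding circle_equation_def[abs_def] by (intro is_poly2_diff is_poly2_add is_poly2_const) auto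
qed

definition circle_equation_poly :: "real \<times> real \<Rightarrow> real \<Rightarrow> real \<times> real \<Rightarrow> complex poly" where
  "circle_equation_poly c' r c = (let d = Complex (fst c - fst c') (snd c - snd c') in
     [: complex_of_real r * d, d * cnj d, complex_of_real r * cnj d :])"

lemma poly_circle_equation_poly:
  assumes "cmod w = 1"
  shows "complex_of_real (circle_equation c' r (circle_point c r w)) * w = poly (circle_equation_poly c' r c) w"
proof -
  define d where "d = Complex (fst c - fst c') (snd c - snd c')"
  have "complex_of_real (circle_equation c' r (circle_point c r w)) * w =
      ((d + complex_of_real r * w) * cnj (d + complex_of_real r * w) - complex_of_real (r\<^sup>2)) * w"
    unfolding circle_equation_def circle_point_def d_def by (simp add: complex_eq_iff power2_eq_square algebra_simps)
  also have "\<dots> = d * cnj d * w + complex_of_real r * d * (cnj w * w) + complex_of_real r * cnj d * w * w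
      + complex_of_real (r\<^sup>2) * w * (cnj w * w) - complex_of_real (r\<^sup>2) * w"
    by (simp add: algebra_simps power2_eq_square)
  also have "\<dots> = poly (circle_equation_poly c' r c) w"
    unfolding cnj_mult_unit[OF assms] circle_equation_poly_def d_def[symmetric] Let_def
    by (simp add: algebra_simps power2_eq_square)
  finally show ?thesis .
qed

lemma degree_circle_equation_poly: "r \<noteq> 0 \<Longrightarrow> c \<noteq> c' \<Longrightarrow> degree (circle_equation_poly c' r c) = 2"
  unfolding circle_equation_poly_def Let_def by (cases c; cases c') (auto simp: complex_eq_iff)

lemma circle_trig_poly_circle_equation: "circle_trig_poly 1 c r (circle_equation c' r)"
  unfolding circle_trig_poly_def using poly_circle_equation_poly
  by (intro exI[of _ "circle_equation_poly c' r c"]) (simp add: circle_equation_poly_def Let_def)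

lemma poly_circle_equation_poly_eq_0_iff:
  "r \<ge> 0 \<Longrightarrow> cmod w = 1 \<Longrightarrow> poly (circle_equation_poly c' r c) w = 0 \<longleftrightarrow> circle_point c r w \<in> sphere c' r"
  by (auto simp flip: poly_circle_equation_poly simp: circle_equation_eq_0_iff)

lemma is_poly2_Re_Im_power:
  assumes "is_poly2 1 (\<lambda>x. Re (Z x))" "is_poly2 1 (\<lambda>x. Im (Z x))"
  shows "is_poly2 j (\<lambda>x. Re (Z x ^ j)) \<and> is_poly2 j (\<lambda>x. Im (Z x ^ j))"
proof (induction j)
  case 0
  then show ?case by (simp add: is_poly2_const)
next
  case (Suc j)
  have "is_poly2 (1 + j) (\<lambda>x. Re (Z x) * Re (Z x ^ j) - Im (Z x) * Im (Z x ^ j))"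
    "is_poly2 (1 + j) (\<lambda>x. Re (Z x) * Im (Z x ^ j) + Im (Z x) * Re (Z x ^ j))"
    using Suc assms by (intro is_poly2_diff is_poly2_add is_poly2_mult; simp)+
  then show ?case by simp
qed

lemma poly_div_power_on_unit_circle:
  fixes h :: "complex poly"
  assumes "degree h \<le> 2 * m" "cmod w = 1"
  shows "poly h w / w ^ m = (\<Sum>k\<le>2 * m. coeff h k * (if m \<le> k then w ^ (k - m) else cnj w ^ (m - k)))"
proof -
  have "(if m \<le> k then w ^ (k - m) else cnj w ^ (m - k)) * w ^ m = w ^ k" for k
  proof (cases "m \<le> k")
    case False
    then have "cnj w ^ (m - k) * w ^ m = (cnj w * w) ^ (m - k) * w ^ k"
      by (simp add: power_mult_distrib flip: power_add)
    then show ?thesis using False cnj_mult_unit[OF assms(2)] by simp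
  qed (simp flip: power_add)
  then have "(\<Sum>k\<le>2 * m. coeff h k * (if m \<le> k then w ^ (k - m) else cnj w ^ (m - k))) * w ^ m =
      (\<Sum>k\<le>2 * m. coeff h k * w ^ k)"
    by (simp add: sum_distrib_right mult.assoc)
  also have "\<dots> = poly h w"
    by (subst (2) poly_as_sum_of_monoms'[OF assms(1), symmetric]) (simp add: poly_sum poly_monom)
  finally have "(\<Sum>k\<le>2 * m. coeff h k * (if m \<le> k then w ^ (k - m) else cnj w ^ (m - k))) * w ^ m = poly h w" .
  moreover have "w \<noteq> 0" using assms(2) by auto
  ultimately show ?thesis by (simp add: divide_eq_eq)
qed

text \<open>On the circle, \<open>w = Z x\<close> for the complex coordinate \<open>Z\<close> centred at \<open>c\<close> and scaled by \<open>r\<close>,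
  and negative powers of \<open>w\<close> are powers of \<open>cnj (Z x)\<close>.\<close>
lemma poly2_extension_from_circle:
  fixes h :: "complex poly"
  assumes "r > 0" "degree h \<le> 2 * m"
  obtains R where "is_poly2 m R" "\<And>w. cmod w = 1 \<Longrightarrow> R (circle_point c r w) = Re (poly h w / w ^ m)"
proof
  define Z where "Z x = Complex ((fst x - fst c) / r) ((snd x - snd c) / r)" for x
  define mon where "mon k z = (if m \<le> k then z ^ (k - m) else cnj z ^ (m - k))" for k and z :: complex
  define R where "R x = (\<Sum>k\<le>2 * m. Re (coeff h k * mon k (Z x)))" for x
  have "is_poly2 1 (\<lambda>x. Re (Z x))" "is_poly2 1 (\<lambda>x. Im (Z x))"
    unfolding Z_def using is_poly2_scale[OF is_poly2_fst, of "1 / r"] is_poly2_scale[OF is_poly2_snd, of "1 / r"]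
    by (simp_all add: diff_divide_distrib, (intro is_poly2_diff is_poly2_const, simp)+)
  note Z_power = is_poly2_Re_Im_power[OF this]
  have "is_poly2 m (\<lambda>x. Re (coeff h k * mon k (Z x)))" if "k \<le> 2 * m" for k
  proof (cases "m \<le> k")
    case True
    have "is_poly2 (k - m) (\<lambda>x. Re (coeff h k) * Re (Z x ^ (k - m)) - Im (coeff h k) * Im (Z x ^ (k - m)))"
      using Z_power by (intro is_poly2_diff is_poly2_scale) auto
    then show ?thesis using True that unfolding mon_def by (simp add: is_poly2_mono)
  next
    case False
    have "is_poly2 (m - k) (\<lambda>x. Re (coeff h k) * Re (Z x ^ (m - k)) + Im (coeff h k) * Im (Z x ^ (m - k)))"
      using Z_power by (intro is_poly2_add is_poly2_scale) auto
    then show ?thesis using False unfolding mon_def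
      by (simp add: is_poly2_mono del: complex_cnj_power flip: complex_cnj_power)
  qed
  then show "is_poly2 m R" unfolding R_def by (intro is_poly2_sum) auto
  fix w :: complex assume "cmod w = 1"
  have "Z (circle_point c r w) = w"
    using assms(1) unfolding Z_def circle_point_def by (simp add: complex_eq_iff)
  then have "R (circle_point c r w) = Re (\<Sum>k\<le>2 * m. coeff h k * mon k w)"
    unfolding R_def by (simp only: Re_sum)
  also have "\<dots> = Re (poly h w / w ^ m)"
    unfolding mon_def poly_div_power_on_unit_circle[OF assms(2) \<open>cmod w = 1\<close>] ..
  finally show "R (circle_point c r w) = Re (poly h w / w ^ m)" .
qed

lemma quadratic_dvd_of_roots:
  fixes p q :: "'a::field poly"
  assumes "degree q = 2" "poly q a = 0" "poly q b = 0" "a \<noteq> b" "poly p a = 0" "poly p b = 0"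
  shows "q dvd p"
proof -
  define ab where "ab = [:-a, 1:] * [:-b, 1:]"
  have ab_dvd: "ab dvd f" if roots: "poly f a = 0" "poly f b = 0" for f
  proof -
    obtain f1 where f1: "f = [:-a, 1:] * f1" using roots(1) unfolding poly_eq_0_iff_dvd dvd_def by blast
    then have "poly f1 b = 0" using roots(2) assms(4) by simp
    then show ?thesis unfolding ab_def f1 poly_eq_0_iff_dvd by (rule mult_dvd_mono[OF dvd_refl])
  qed
  obtain q2 where q2: "q = ab * q2" using ab_dvd[OF assms(2,3)] by blast
  have "ab \<noteq> 0" "degree ab = 2" unfolding ab_def by (simp_all del: mult_pCons_left add: degree_mult_eq)
  moreover have "q2 \<noteq> 0" using assms(1) q2 by auto
  ultimately have "degree q2 = 0" using assms(1) q2 by (simp add: degree_mult_eq)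
  then obtain k where "q2 = [:k:]" "k \<noteq> 0" using \<open>q2 \<noteq> 0\<close> by (metis degree_eq_zeroE pCons_0_0)
  then have "ab = q * [:inverse k:]" unfolding q2 by (simp flip: mult.assoc)
  then have "q dvd ab" by (rule dvdI)
  then show ?thesis using ab_dvd[OF assms(5,6)] by (rule dvd_trans)
qed

lemma prod_dvd_of_private_roots:
  fixes p :: "'b::field poly" and q :: "'a \<Rightarrow> 'b poly"
  assumes "finite I" and "\<And>i. i \<in> I \<Longrightarrow> degree (q i) = 2"
    and "\<And>i. i \<in> I \<Longrightarrow> \<exists>a b. a \<noteq> b \<and> poly (q i) a = 0 \<and> poly (q i) b = 0 \<and> poly p a = 0 \<and> poly p b = 0 \<and>
        (\<forall>j\<in>I - {i}. poly (q j) a \<noteq> 0 \<and> poly (q j) b \<noteq> 0)"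
  shows "(\<Prod>i\<in>I. q i) dvd p"
  using assms(1) subset_refl
proof (induction rule: finite_subset_induct')
  case empty
  then show ?case by simp
next
  case (insert i J)
  then obtain h where h: "p = (\<Prod>j\<in>J. q j) * h" by blast
  obtain a b where ab: "a \<noteq> b" "poly (q i) a = 0" "poly (q i) b = 0" "poly p a = 0" "poly p b = 0"
    "\<forall>j\<in>I - {i}. poly (q j) a \<noteq> 0 \<and> poly (q j) b \<noteq> 0"
    using assms(3)[OF \<open>i \<in> I\<close>] by blast
  have "poly (\<Prod>j\<in>J. q j) a \<noteq> 0" "poly (\<Prod>j\<in>J. q j) b \<noteq> 0"
    using ab(6) insert by (auto simp: poly_prod prod_zero_iff)
  then have "poly h a = 0" "poly h b = 0" using ab(4,5) unfolding h by auto
  then have "q i dvd h" using quadratic_dvd_of_roots[OF assms(2)[OF \<open>i \<in> I\<close>] ab(2,3,1)] by blast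
  then show ?case using insert unfolding h by (simp add: mult_dvd_mono mult.commute)
qed

lemma of_real_mult_power_cancel:
  fixes w H :: complex
  assumes "w \<noteq> 0" "k \<le> n" "complex_of_real a * w ^ n = complex_of_real b * w ^ k * H"
  shows "a = b * Re (H / w ^ (n - k))"
proof -
  have "(complex_of_real a * w ^ (n - k)) * w ^ k = (complex_of_real b * H) * w ^ k"
    using assms(2,3) by (simp add: mult_ac flip: power_add)
  then have "complex_of_real a = complex_of_real b * (H / w ^ (n - k))"
    using assms(1) by (simp add: field_simps)
  then have "Re (complex_of_real a) = Re (complex_of_real b * (H / w ^ (n - k)))" by (rule arg_cong)
  moreover have "Re (complex_of_real b * z) = b * Re z" for z by simp
  ultimately show ?thesis by (simp only: Re_complex_of_real)
qed

section \<open>Interpolation on circles in general position\<close>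

definition circles_in_general_position :: "real \<Rightarrow> (real \<times> real) set \<Rightarrow> bool" where
  "circles_in_general_position r K \<longleftrightarrow> (\<forall>c\<in>K. \<forall>c'\<in>K. dist c c' < 2 * r) \<and>
     (\<forall>c1\<in>K. \<forall>c2\<in>K. \<forall>c3\<in>K. c1 \<noteq> c2 \<longrightarrow> c1 \<noteq> c3 \<longrightarrow> c2 \<noteq> c3 \<longrightarrow>
        sphere c1 r \<inter> sphere c2 r \<inter> sphere c3 r = {})"

lemma general_position_no_triple_point:
  "circles_in_general_position r K \<Longrightarrow> {c1, c2, c3} \<subseteq> K \<Longrightarrow> c1 \<noteq> c2 \<Longrightarrow> c1 \<noteq> c3 \<Longrightarrow> c2 \<noteq> c3 \<Longrightarrow>
    x \<in> sphere c1 r \<Longrightarrow> x \<in> sphere c2 r \<Longrightarrow> x \<notin> sphere c3 r"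
  unfolding circles_in_general_position_def by blast

lemma general_position_intersections:
  assumes "r > 0" "circles_in_general_position r K" "c \<in> K" "c' \<in> K" "c \<noteq> c'"
  obtains w1 w2 where "w1 \<noteq> w2" "cmod w1 = 1" "cmod w2 = 1"
    "circle_point c r w1 \<in> sphere c' r" "circle_point c r w2 \<in> sphere c' r"
  using circles_intersect_twice[OF assms(1), of c c'] assms(2-5)
  unfolding circles_in_general_position_def by auto

lemma prod_circle_equation_poly_dvd:
  assumes "r > 0" "circles_in_general_position r K" "finite C" "insert c C \<subseteq> K" "c \<notin> C"
    and "\<And>c' w. c' \<in> C \<Longrightarrow> cmod w = 1 \<Longrightarrow> circle_point c r w \<in> sphere c' r \<Longrightarrow> poly p w = 0"
  shows "(\<Prod>c'\<in>C. circle_equation_poly c' r c) dvd p"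
proof (rule prod_dvd_of_private_roots[OF assms(3)])
  fix c' assume "c' \<in> C"
  then show "degree (circle_equation_poly c' r c) = 2"
    using assms(1,5) by (intro degree_circle_equation_poly) auto
  have "c' \<in> K" "c \<noteq> c'" using \<open>c' \<in> C\<close> assms(4,5) by auto
  then obtain w1 w2 where w: "w1 \<noteq> w2" "cmod w1 = 1" "cmod w2 = 1"
    "circle_point c r w1 \<in> sphere c' r" "circle_point c r w2 \<in> sphere c' r"
    using general_position_intersections[OF assms(1,2)] assms(4) by blast
  have "poly (circle_equation_poly c' r c) w = 0 \<and> poly p w = 0 \<and>
      (\<forall>c''\<in>C - {c'}. poly (circle_equation_poly c'' r c) w \<noteq> 0)"
    if "cmod w = 1" "circle_point c r w \<in> sphere c' r" for w
  proof (intro conjI ballI notI)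
    show "poly (circle_equation_poly c' r c) w = 0" "poly p w = 0"
      using that assms(1) \<open>c' \<in> C\<close> by (simp_all add: poly_circle_equation_poly_eq_0_iff assms(6))
    fix c'' assume c'': "c'' \<in> C - {c'}" "poly (circle_equation_poly c'' r c) w = 0"
    then have "{c, c', c''} \<subseteq> K" "c \<noteq> c''" "c' \<noteq> c''" using \<open>c' \<in> C\<close> assms(4,5) by auto
    moreover have "circle_point c r w \<in> sphere c r" using that(1) assms(1) by (intro circle_point_in_sphere) auto
    ultimately show False
      using general_position_no_triple_point[OF assms(2) _ \<open>c \<noteq> c'\<close>] c''(2) that assms(1)
      by (auto simp: poly_circle_equation_poly_eq_0_iff)
  qed
  with w show "\<exists>a b. a \<noteq> b \<and> poly (circle_equation_poly c' r c) a = 0 \<and> poly (circle_equation_poly c' r c) b = 0 \<and>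
      poly p a = 0 \<and> poly p b = 0 \<and> (\<forall>c''\<in>C - {c'}. poly (circle_equation_poly c'' r c) a \<noteq> 0 \<and>
      poly (circle_equation_poly c'' r c) b \<noteq> 0)"
    by blast
qed

lemma degree_prod_circle_equation_poly:
  assumes "r \<noteq> 0" "finite C" "c \<notin> C"
  shows "degree (\<Prod>c'\<in>C. circle_equation_poly c' r c) = 2 * card C"
    and "(\<Prod>c'\<in>C. circle_equation_poly c' r c) \<noteq> 0"
proof -
  have deg: "degree (circle_equation_poly c' r c) = 2" if "c' \<in> C" for c'
    using that assms by (intro degree_circle_equation_poly) auto
  then have nonzero: "\<forall>c'\<in>C. circle_equation_poly c' r c \<noteq> 0" by fastforce
  then have "degree (\<Prod>c'\<in>C. circle_equation_poly c' r c) = (\<Sum>c'\<in>C. 2)"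
    using deg by (simp add: degree_prod_eq_sum_degree)
  then show "degree (\<Prod>c'\<in>C. circle_equation_poly c' r c) = 2 * card C" by simp
  show "(\<Prod>c'\<in>C. circle_equation_poly c' r c) \<noteq> 0" using nonzero assms(2) by simp
qed

lemma circle_trig_poly_divisible:
  assumes "r > 0" "circles_in_general_position r K" "finite C" "insert c C \<subseteq> K" "c \<notin> C"
    and "circle_trig_poly n c r g" "card C \<le> n"
    and "\<And>c' x. c' \<in> C \<Longrightarrow> x \<in> sphere c r \<Longrightarrow> x \<in> sphere c' r \<Longrightarrow> g x = 0"
  obtains R where "is_poly2 (n - card C) R"
    "\<And>x. x \<in> sphere c r \<Longrightarrow> g x = (\<Prod>c'\<in>C. circle_equation c' r x) * R x"
proof -
  obtain p where p: "degree p \<le> 2 * n"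
    "\<And>w. cmod w = 1 \<Longrightarrow> complex_of_real (g (circle_point c r w)) * w ^ n = poly p w"
    using assms(6) unfolding circle_trig_poly_def by blast
  have "(\<Prod>c'\<in>C. circle_equation_poly c' r c) dvd p"
  proof (rule prod_circle_equation_poly_dvd[OF assms(1-5)])
    fix c' w assume "c' \<in> C" "cmod w = 1" "circle_point c r w \<in> sphere c' r"
    moreover have "circle_point c r w \<in> sphere c r" using \<open>cmod w = 1\<close> assms(1) by (intro circle_point_in_sphere) auto
    ultimately show "poly p w = 0" using p(2) assms(8) by fastforce
  qed
  then obtain h where h: "p = (\<Prod>c'\<in>C. circle_equation_poly c' r c) * h" by blast
  have "degree h \<le> 2 * (n - card C)"
  proof (cases "h = 0")
    case False
    then have "degree p = 2 * card C + degree h"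
      unfolding h using degree_prod_circle_equation_poly[of r C c] assms(1,3,5) by (simp add: degree_mult_eq)
    then show ?thesis using p(1) by linarith
  qed simp
  then obtain R where R: "is_poly2 (n - card C) R"
    "\<And>w. cmod w = 1 \<Longrightarrow> R (circle_point c r w) = Re (poly h w / w ^ (n - card C))"
    using poly2_extension_from_circle[OF assms(1)] by blast
  show ?thesis
  proof (rule that[OF R(1)])
    fix x assume "x \<in> sphere c r"
    then obtain w where w: "cmod w = 1" "x = circle_point c r w" using sphere_circle_pointE[OF assms(1)] by blast
    have "complex_of_real (g x) * w ^ n = (\<Prod>c'\<in>C. complex_of_real (circle_equation c' r x) * w) * poly h w"
      unfolding p(2)[OF w(1), folded w(2)] h by (simp add: poly_prod poly_circle_equation_poly[OF w(1)] w(2))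
    also have "\<dots> = complex_of_real (\<Prod>c'\<in>C. circle_equation c' r x) * w ^ card C * poly h w"
      by (simp add: prod.distrib)
    finally have "g x = (\<Prod>c'\<in>C. circle_equation c' r x) * Re (poly h w / w ^ (n - card C))"
      using w(1) by (intro of_real_mult_power_cancel[OF _ assms(7)]) auto
    then show "g x = (\<Prod>c'\<in>C. circle_equation c' r x) * R x" using R(2) w by simp
  qed
qed

lemma circle_interpolation_step:
  assumes "r > 0" "circles_in_general_position r K" "finite C" "insert c C \<subseteq> K" "c \<notin> C" "card C \<le> N"
    and P: "is_poly2 (2 * N) P" "\<And>c'. circle_trig_poly N c' r P"
    and Q: "is_poly2 N Q" "\<And>c' x. c' \<in> C \<Longrightarrow> x \<in> sphere c r \<Longrightarrow> x \<in> sphere c' r \<Longrightarrow> Q x = P x"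
  obtains P' where "is_poly2 (2 * N) P'" "\<And>c'. circle_trig_poly N c' r P'"
    "\<And>c' x. c' \<in> C \<Longrightarrow> x \<in> sphere c' r \<Longrightarrow> P' x = P x" "\<And>x. x \<in> sphere c r \<Longrightarrow> P' x = Q x"
proof -
  have "circle_trig_poly N c r (\<lambda>x. Q x - P x)"
    by (intro circle_trig_poly_diff circle_trig_poly_of_poly2 Q(1) P(2))
  moreover have "Q x - P x = 0" if "c' \<in> C" "x \<in> sphere c r" "x \<in> sphere c' r" for c' x
    using Q(2)[OF that] by simp
  ultimately obtain R where R: "is_poly2 (N - card C) R"
    "\<And>x. x \<in> sphere c r \<Longrightarrow> Q x - P x = (\<Prod>c'\<in>C. circle_equation c' r x) * R x"
    using circle_trig_poly_divisible[OF assms(1-5) _ assms(6)] by blast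
  define P' where "P' x = P x + (\<Prod>c'\<in>C. circle_equation c' r x) * R x" for x
  show ?thesis
  proof (rule that[of P'])
    have "is_poly2 (card C * 2 + (N - card C)) (\<lambda>x. (\<Prod>c'\<in>C. circle_equation c' r x) * R x)"
      by (intro is_poly2_mult is_poly2_prod R(1) is_poly2_circle_equation assms(3))
    then show "is_poly2 (2 * N) P'"
      unfolding P'_def using assms(6) by (intro is_poly2_add P(1)) (auto elim: is_poly2_mono)
    fix c'
    have "circle_trig_poly (card C * 1 + (N - card C)) c' r (\<lambda>x. (\<Prod>c'\<in>C. circle_equation c' r x) * R x)"
      by (intro circle_trig_poly_mult circle_trig_poly_prod circle_trig_poly_of_poly2 R(1)
          circle_trig_poly_circle_equation assms(3))
    then show "circle_trig_poly N c' r P'"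
      unfolding P'_def using assms(6) by (intro circle_trig_poly_add P(2)) simp
    fix x
    show "P' x = P x" if "c' \<in> C" "x \<in> sphere c' r"
      using that assms(1,3) by (auto simp: P'_def prod_zero_iff circle_equation_eq_0_iff)
    show "P' x = Q x" if "x \<in> sphere c r" using R(2)[OF that] by (simp add: P'_def)
  qed
qed

text \<open>The interpolant has to be a trigonometric polynomial of degree \<open>N\<close> on every circle, not only
  on those of \<open>C\<close>, so that the next interpolation step (and the final uniqueness argument) applies.\<close>
lemma circle_interpolation:
  assumes "r > 0" "circles_in_general_position r K" "finite C" "C \<subseteq> K" "card C \<le> N + 1"
    and "\<And>c. c \<in> C \<Longrightarrow> \<exists>Q. is_poly2 N Q \<and> (\<forall>x\<in>sphere c r. F x = Q x)"
  shows "\<exists>P. is_poly2 (2 * N) P \<and> (\<forall>c. circle_trig_poly N c r P) \<and> (\<forall>c\<in>C. \<forall>x\<in>sphere c r. F x = P x)"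
  using assms(3-6)
proof (induction C rule: finite_induct)
  case empty
  show ?case by (intro exI[of _ "\<lambda>_. 0"]) (simp add: is_poly2_const circle_trig_poly_const)
next
  case (insert c C)
  obtain P where P: "is_poly2 (2 * N) P" "\<And>c. circle_trig_poly N c r P"
    "\<And>c' x. c' \<in> C \<Longrightarrow> x \<in> sphere c' r \<Longrightarrow> F x = P x"
    using insert by auto
  obtain Q where Q: "is_poly2 N Q" "\<And>x. x \<in> sphere c r \<Longrightarrow> F x = Q x" using insert.prems(3) by blast
  have "card C \<le> N" using insert by simp
  obtain P' where "is_poly2 (2 * N) P'" "\<And>c'. circle_trig_poly N c' r P'"
    "\<And>c' x. c' \<in> C \<Longrightarrow> x \<in> sphere c' r \<Longrightarrow> P' x = P x" "\<And>x. x \<in> sphere c r \<Longrightarrow> P' x = Q x"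
  proof (rule circle_interpolation_step[OF assms(1,2) insert(1) insert.prems(1) insert(2) \<open>card C \<le> N\<close> P(1,2) Q(1)])
    show "Q x = P x" if "c' \<in> C" "x \<in> sphere c r" "x \<in> sphere c' r" for c' x
      using P(3)[OF that(1,3)] Q(2)[OF that(2)] by simp
  qed (rule that)
  then show ?case using P(3) Q(2) by auto
qed

lemma general_position_intersection_points:
  assumes "r > 0" "circles_in_general_position r K" "finite C" "insert c C \<subseteq> K" "c \<notin> C"
  obtains W where "finite W" "card W = 2 * card C"
    "\<And>w. w \<in> W \<Longrightarrow> cmod w = 1 \<and> (\<exists>c'\<in>C. circle_point c r w \<in> sphere c' r)"
proof -
  have "\<forall>c'\<in>C. \<exists>W. card W = 2 \<and> (\<forall>w\<in>W. cmod w = 1 \<and> circle_point c r w \<in> sphere c' r)"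
  proof
    fix c' assume "c' \<in> C"
    then have "c \<in> K" "c' \<in> K" "c \<noteq> c'" using assms(4,5) by auto
    then obtain w1 w2 where "w1 \<noteq> w2" "cmod w1 = 1" "cmod w2 = 1"
      "circle_point c r w1 \<in> sphere c' r" "circle_point c r w2 \<in> sphere c' r"
      by (rule general_position_intersections[OF assms(1,2)])
    then show "\<exists>W. card W = 2 \<and> (\<forall>w\<in>W. cmod w = 1 \<and> circle_point c r w \<in> sphere c' r)"
      by (intro exI[of _ "{w1, w2}"]) auto
  qed
  then obtain W where "\<forall>c'\<in>C. card (W c') = 2 \<and> (\<forall>w\<in>W c'. cmod w = 1 \<and> circle_point c r w \<in> sphere c' r)"
    by (rule bchoice[THEN exE])
  then have W: "\<And>c'. c' \<in> C \<Longrightarrow> card (W c') = 2"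
    "\<And>c' w. c' \<in> C \<Longrightarrow> w \<in> W c' \<Longrightarrow> cmod w = 1 \<and> circle_point c r w \<in> sphere c' r"
    by auto
  have finite: "\<forall>c'\<in>C. finite (W c')" using W(1) by (simp add: card_ge_0_finite)
  have "card (\<Union>c'\<in>C. W c') = (\<Sum>c'\<in>C. card (W c'))"
  proof (rule card_UN_disjoint[OF assms(3) finite])
    show "\<forall>c'\<in>C. \<forall>c''\<in>C. c' \<noteq> c'' \<longrightarrow> W c' \<inter> W c'' = {}"
    proof (intro ballI impI equals0I)
      fix c' c'' w assume "c' \<in> C" "c'' \<in> C" "c' \<noteq> c''" "w \<in> W c' \<inter> W c''"
      moreover from this have "{c, c', c''} \<subseteq> K" "c \<noteq> c'" "c \<noteq> c''" using assms(4,5) by auto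
      moreover have "circle_point c r w \<in> sphere c r"
        using W(2) calculation(1,4) assms(1) by (intro circle_point_in_sphere) auto
      ultimately show False using W(2) general_position_no_triple_point[OF assms(2)] by (meson IntD1 IntD2)
    qed
  qed
  also have "\<dots> = 2 * card C" using W(1) by simp
  finally show ?thesis using W(2) finite assms(3) by (intro that[of "\<Union>c'\<in>C. W c'"]) auto
qed

lemma circle_trig_poly_vanishes:
  assumes "r > 0" "circles_in_general_position r K" "finite C" "insert c C \<subseteq> K" "c \<notin> C"
    and "circle_trig_poly n c r g" "n < card C"
    and "\<And>c' x. c' \<in> C \<Longrightarrow> x \<in> sphere c r \<Longrightarrow> x \<in> sphere c' r \<Longrightarrow> g x = 0"
    and "x \<in> sphere c r"
  shows "g x = 0"
proof -
  obtain W where W: "finite W" "card W = 2 * card C"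
    "\<And>w. w \<in> W \<Longrightarrow> cmod w = 1 \<and> (\<exists>c'\<in>C. circle_point c r w \<in> sphere c' r)"
    by (rule general_position_intersection_points[OF assms(1-5)], rule that)
  obtain w where w: "cmod w = 1" "x = circle_point c r w" using sphere_circle_pointE[OF assms(1,9)] by blast
  show ?thesis unfolding w(2)
  proof (rule circle_trig_poly_eq_0[OF assms(6) W(1) _ _ w(1)])
    show "2 * n < card W" using W(2) assms(7) by simp
    fix v assume "v \<in> W"
    then obtain c' where "cmod v = 1" "c' \<in> C" "circle_point c r v \<in> sphere c' r" using W(3) by blast
    moreover have "circle_point c r v \<in> sphere c r" using \<open>cmod v = 1\<close> assms(1) by (intro circle_point_in_sphere) auto
    ultimately show "cmod v = 1 \<and> g (circle_point c r v) = 0" using assms(8) by blast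
  qed
qed

section \<open>Circles centred on the curve\<close>

lemma arclength_curve_has_vector_derivative:
  assumes "arclength_simple_closed_curve \<gamma> L"
  shows "(\<gamma> has_vector_derivative vector_derivative \<gamma> (at s)) (at s)"
proof -
  have "Ck_on 1 UNIV \<gamma>" using assms unfolding arclength_simple_closed_curve_def smooth_on_def by blast
  then show ?thesis by (simp add: differentiable_on_def vector_derivative_works)
qed

lemma arclength_curve_continuous_on:
  "arclength_simple_closed_curve \<gamma> L \<Longrightarrow> continuous_on S \<gamma>"
  using arclength_curve_has_vector_derivative[THEN has_vector_derivative_continuous]
  by (intro continuous_at_imp_continuous_on) blast

lemma arclength_curve_dist_le:
  assumes "arclength_simple_closed_curve \<gamma> L"
  shows "dist (\<gamma> a) (\<gamma> b) \<le> \<bar>a - b\<bar>"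
proof -
  have "norm (\<gamma> a - \<gamma> b) \<le> 1 * norm (a - b)"
  proof (rule differentiable_bound[of UNIV \<gamma> "\<lambda>s h. h *\<^sub>R vector_derivative \<gamma> (at s)"])
    show "(\<gamma> has_derivative (\<lambda>h. h *\<^sub>R vector_derivative \<gamma> (at s))) (at s within UNIV)" for s
      using arclength_curve_has_vector_derivative[OF assms] by (simp add: has_vector_derivative_def)
    show "onorm (\<lambda>h. h *\<^sub>R vector_derivative \<gamma> (at s)) \<le> 1" for s
      using assms unfolding arclength_simple_closed_curve_def by (intro onorm_le) simp
  qed auto
  then show ?thesis by (simp add: dist_norm)
qed

lemma arclength_curve_periodic:
  assumes "arclength_simple_closed_curve \<gamma> L"
  shows "\<gamma> (s + of_int k * L) = \<gamma> s"
proof -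
  have per: "\<gamma> (t + L) = \<gamma> t" for t using assms unfolding arclength_simple_closed_curve_def by blast
  show ?thesis
  proof (induction k rule: int_induct[where k = 0])
    case (step1 i)
    have "s + of_int (i + 1) * L = (s + of_int i * L) + L" by (simp add: algebra_simps)
    then show ?case using step1 per by metis
  next
    case (step2 i)
    have "s + of_int i * L = (s + of_int (i - 1) * L) + L" by (simp add: algebra_simps)
    then show ?case using step2 per by metis
  qed simp
qed

lemma unit_normal_periodic:
  assumes "arclength_simple_closed_curve \<gamma> L"
  shows "unit_normal \<gamma> (s + of_int k * L) = unit_normal \<gamma> s"
proof -
  have "\<gamma> \<circ> (\<lambda>t. t + of_int k * L) = \<gamma>" using arclength_curve_periodic[OF assms] by auto
  moreover have "((\<gamma> \<circ> (\<lambda>t. t + of_int k * L)) has_vector_derivative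
      (1 *\<^sub>R vector_derivative \<gamma> (at (s + of_int k * L)))) (at s)"
    by (rule vector_diff_chain_at)
       (auto intro!: derivative_eq_intros arclength_curve_has_vector_derivative[OF assms])
  ultimately have "vector_derivative \<gamma> (at s) = vector_derivative \<gamma> (at (s + of_int k * L))"
    by (intro vector_derivative_at) simp
  then show ?thesis unfolding unit_normal_def unit_tangent_def by simp
qed

lemma tube_map_inj:
  assumes curve: "arclength_simple_closed_curve \<gamma> L" and tub: "tubular_radius \<gamma> L \<rho>"
    and "\<bar>t1\<bar> < \<rho>" "\<bar>t2\<bar> < \<rho>" "\<bar>z1 - z2\<bar> < L"
    and eq: "\<gamma> z1 + t1 *\<^sub>R unit_normal \<gamma> z1 = \<gamma> z2 + t2 *\<^sub>R unit_normal \<gamma> z2"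
  shows "z1 = z2"
proof -
  have "L > 0" using curve unfolding arclength_simple_closed_curve_def by blast
  define k1 k2 where "k1 = \<lfloor>z1 / L\<rfloor>" and "k2 = \<lfloor>z2 / L\<rfloor>"
  define a1 a2 where "a1 = z1 - of_int k1 * L" and "a2 = z2 - of_int k2 * L"
  have "z - of_int \<lfloor>z / L\<rfloor> * L \<in> {0..<L}" for z
  proof -
    have "of_int \<lfloor>z / L\<rfloor> * L \<le> z"
      by (rule pos_le_divide_eq[OF \<open>L > 0\<close>, THEN iffD1, OF of_int_floor_le])
    moreover have "z < (of_int \<lfloor>z / L\<rfloor> + 1) * L"
      by (rule pos_divide_less_eq[OF \<open>L > 0\<close>, THEN iffD1, OF real_of_int_floor_add_one_gt])
    ultimately show ?thesis by (simp add: algebra_simps)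
  qed
  then have "a1 \<in> {0..<L}" "a2 \<in> {0..<L}" unfolding a1_def a2_def k1_def k2_def by blast+
  moreover have "\<gamma> a1 + t1 *\<^sub>R unit_normal \<gamma> a1 = \<gamma> a2 + t2 *\<^sub>R unit_normal \<gamma> a2"
  proof -
    have "z1 = a1 + of_int k1 * L" "z2 = a2 + of_int k2 * L" unfolding a1_def a2_def by simp_all
    then show ?thesis using eq by (simp add: arclength_curve_periodic[OF curve] unit_normal_periodic[OF curve])
  qed
  moreover have "inj_on (\<lambda>(s, t). \<gamma> s + t *\<^sub>R unit_normal \<gamma> s) ({0..<L} \<times> {-\<rho><..<\<rho>})"
    using tub unfolding tubular_radius_def by blast
  ultimately have "(a1, t1) = (a2, t2)" using assms(3,4) by (elim inj_onD) auto
  then have "a1 = a2" by simp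
  then have "z1 - z2 = of_int (k1 - k2) * L" unfolding a1_def a2_def by (simp add: algebra_simps)
  then have "\<bar>of_int (k1 - k2)\<bar> * L < 1 * L" using assms(5) \<open>L > 0\<close> by (simp add: abs_mult)
  then have "\<bar>of_int (k1 - k2) :: real\<bar> < 1" using \<open>L > 0\<close> by (simp add: mult_less_cancel_right)
  then have "k1 = k2" by linarith
  then show ?thesis using \<open>a1 = a2\<close> unfolding a1_def a2_def by simp
qed

lemma foot_point_between:
  assumes "arclength_simple_closed_curve \<gamma> L"
    and "a < b" "x \<in> sphere (\<gamma> a) r" "x \<in> sphere (\<gamma> b) r"
  obtains z where "a < z" "z < b" "inner (x - \<gamma> z) (vector_derivative \<gamma> (at z)) = 0"
proof -
  define T where "T t = vector_derivative \<gamma> (at t)" for t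
  define g where "g t = inner (x - \<gamma> t) (x - \<gamma> t)" for t
  define g' where "g' t h = inner (x - \<gamma> t) (0 - h *\<^sub>R T t) + inner (0 - h *\<^sub>R T t) (x - \<gamma> t)" for t h
  have dg: "(g has_derivative g' t) (at t)" for t
  proof -
    have "(\<gamma> has_derivative (\<lambda>h. h *\<^sub>R T t)) (at t)"
      using arclength_curve_has_vector_derivative[OF assms(1)] unfolding T_def has_vector_derivative_def .
    then have dx: "((\<lambda>t. x - \<gamma> t) has_derivative (\<lambda>h. 0 - h *\<^sub>R T t)) (at t)"
      by (rule has_derivative_diff[OF has_derivative_const])
    show ?thesis unfolding g_def[abs_def] g'_def by (rule has_derivative_inner[OF dx dx])
  qed
  have "g a = g b"
    using assms(3,4) unfolding g_def by (simp add: dist_norm norm_minus_commute flip: power2_norm_eq_inner)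
  moreover have "continuous_on {a..b} g"
    using dg by (intro continuous_at_imp_continuous_on) (blast intro: has_derivative_continuous)
  ultimately obtain z where z: "a < z" "z < b" "g' z = (\<lambda>h. 0)"
    using Rolle_deriv[OF assms(2), of g g'] dg by (blast intro: has_derivative_at_withinI)
  then have "g' z 1 = 0" by simp
  then have "inner (x - \<gamma> z) (T z) = 0" unfolding g'_def by (simp add: inner_commute)
  then show ?thesis using z that unfolding T_def by blast
qed

lemma orthogonal_eq_scaleR_rotation:
  fixes v T :: "real \<times> real"
  assumes "norm T = 1" "inner v T = 0"
  shows "v = inner v (- snd T, fst T) *\<^sub>R (- snd T, fst T)"
proof -
  obtain v1 v2 T1 T2 where v: "v = (v1, v2)" and T: "T = (T1, T2)" by (cases v, cases T)
  have "T1\<^sup>2 + T2\<^sup>2 = 1" "v1 * T1 + v2 * T2 = 0"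
    using assms unfolding v T by (simp_all add: norm_Pair inner_Pair)
  then have "v1 = (v1 * (- T2) + v2 * T1) * (- T2)" "v2 = (v1 * (- T2) + v2 * T1) * T1" by algebra+
  then show ?thesis unfolding v T by (simp add: inner_Pair)
qed

lemma foot_point_on_normal:
  assumes "arclength_simple_closed_curve \<gamma> L" "inner (x - \<gamma> z) (vector_derivative \<gamma> (at z)) = 0"
  obtains t where "\<bar>t\<bar> = dist x (\<gamma> z)" "x = \<gamma> z + t *\<^sub>R unit_normal \<gamma> z"
proof
  define T where "T = vector_derivative \<gamma> (at z)"
  have "norm T = 1" using assms(1) unfolding T_def arclength_simple_closed_curve_def by blast
  have \<nu>: "unit_normal \<gamma> z = (- snd T, fst T)" unfolding unit_normal_def unit_tangent_def T_def ..
  have "norm (unit_normal \<gamma> z) = 1" using \<open>norm T = 1\<close> unfolding \<nu> by (cases T) (simp add: norm_Pair add.commute)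
  have eq: "x - \<gamma> z = inner (x - \<gamma> z) (unit_normal \<gamma> z) *\<^sub>R unit_normal \<gamma> z"
    unfolding \<nu> using \<open>norm T = 1\<close> assms(2) unfolding T_def by (rule orthogonal_eq_scaleR_rotation)
  then show "x = \<gamma> z + inner (x - \<gamma> z) (unit_normal \<gamma> z) *\<^sub>R unit_normal \<gamma> z"
    by (simp add: algebra_simps)
  show "\<bar>inner (x - \<gamma> z) (unit_normal \<gamma> z)\<bar> = dist x (\<gamma> z)"
    using arg_cong[OF eq, of norm] \<open>norm (unit_normal \<gamma> z) = 1\<close> by (simp add: dist_norm)
qed

text \<open>Between two circles through \<open>x\<close> lies a foot of the normal from \<open>x\<close> to \<open>\<gamma>\<close> (Rolle's theorem
  for \<open>dist x (\<gamma> s)\<^sup>2\<close>); a third circle would give a second foot point, contradicting the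
  injectivity of the tube map.\<close>
lemma no_point_on_three_circles:
  assumes curve: "arclength_simple_closed_curve \<gamma> L" and tub: "tubular_radius \<gamma> L \<rho>"
    and "s1 < s2" "s2 < s3" "s3 - s1 < L" "r + (s3 - s1) < \<rho>"
    and x: "x \<in> sphere (\<gamma> s1) r" "x \<in> sphere (\<gamma> s2) r" "x \<in> sphere (\<gamma> s3) r"
  shows False
proof -
  have normal: "\<exists>t. \<bar>t\<bar> < \<rho> \<and> x = \<gamma> z + t *\<^sub>R unit_normal \<gamma> z"
    if z: "s1 < z" "z < s3" "inner (x - \<gamma> z) (vector_derivative \<gamma> (at z)) = 0" for z
  proof -
    obtain t where t: "\<bar>t\<bar> = dist x (\<gamma> z)" "x = \<gamma> z + t *\<^sub>R unit_normal \<gamma> z"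
      using foot_point_on_normal[OF curve z(3)] by blast
    have "dist x (\<gamma> z) \<le> dist x (\<gamma> s1) + dist (\<gamma> s1) (\<gamma> z)" by (rule dist_triangle)
    also have "\<dots> \<le> r + (s3 - s1)"
      using x(1) arclength_curve_dist_le[OF curve, of s1 z] z by (simp add: dist_commute)
    finally have "\<bar>t\<bar> < \<rho>" using t(1) assms(6) by linarith
    then show ?thesis using t(2) by blast
  qed
  obtain z1 where z1: "s1 < z1" "z1 < s2" "inner (x - \<gamma> z1) (vector_derivative \<gamma> (at z1)) = 0"
    using foot_point_between[OF curve assms(3) x(1,2)] by blast
  obtain z2 where z2: "s2 < z2" "z2 < s3" "inner (x - \<gamma> z2) (vector_derivative \<gamma> (at z2)) = 0"
    using foot_point_between[OF curve assms(4) x(2,3)] by blast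
  obtain t1 where t1: "\<bar>t1\<bar> < \<rho>" "x = \<gamma> z1 + t1 *\<^sub>R unit_normal \<gamma> z1"
    using normal[of z1] z1 assms(4) by auto
  obtain t2 where t2: "\<bar>t2\<bar> < \<rho>" "x = \<gamma> z2 + t2 *\<^sub>R unit_normal \<gamma> z2"
    using normal[of z2] z2 assms(3) by auto
  have "\<bar>z1 - z2\<bar> < L" using z1 z2 assms(5) by linarith
  then have "z1 = z2" using tube_map_inj[OF curve tub t1(1) t2(1)] t1(2) t2(2) by simp
  then show False using z1 z2 by simp
qed

lemma distinct_three_sortedE:
  fixes x y z :: "'a::linorder"
  assumes "x \<noteq> y" "y \<noteq> z" "x \<noteq> z"
  obtains a b c where "a < b" "b < c" "{a, b, c} = {x, y, z}"
  using assms
  by (cases x y rule: linorder_cases; cases y z rule: linorder_cases; cases x z rule: linorder_cases)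
     (auto intro: that)

lemma curve_circles_in_general_position:
  assumes curve: "arclength_simple_closed_curve \<gamma> L" and tub: "tubular_radius \<gamma> L \<rho>"
    and "r + 2 * \<epsilon> < \<rho>" "2 * \<epsilon> < L" "\<epsilon> < r"
  shows "circles_in_general_position r (\<gamma> ` {s. \<bar>s - s0\<bar> < \<epsilon>})"
  unfolding circles_in_general_position_def
proof (intro conjI ballI impI equals0I)
  fix c c' assume "c \<in> \<gamma> ` {s. \<bar>s - s0\<bar> < \<epsilon>}" "c' \<in> \<gamma> ` {s. \<bar>s - s0\<bar> < \<epsilon>}"
  then obtain s s' where "c = \<gamma> s" "c' = \<gamma> s'" "\<bar>s - s0\<bar> < \<epsilon>" "\<bar>s' - s0\<bar> < \<epsilon>" by blast
  then have "dist c c' \<le> \<bar>s - s'\<bar>" "\<bar>s - s'\<bar> < 2 * \<epsilon>"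
    using arclength_curve_dist_le[OF curve, of s s'] by (simp, arith)
  then show "dist c c' < 2 * r" using assms(5) by linarith
next
  fix c1 c2 c3 x
  assume c: "c1 \<in> \<gamma> ` {s. \<bar>s - s0\<bar> < \<epsilon>}" "c2 \<in> \<gamma> ` {s. \<bar>s - s0\<bar> < \<epsilon>}" "c3 \<in> \<gamma> ` {s. \<bar>s - s0\<bar> < \<epsilon>}"
    and "c1 \<noteq> c2" "c1 \<noteq> c3" "c2 \<noteq> c3"
    and x: "x \<in> sphere c1 r \<inter> sphere c2 r \<inter> sphere c3 r"
  obtain s1 s2 s3 where s: "\<bar>s1 - s0\<bar> < \<epsilon>" "\<bar>s2 - s0\<bar> < \<epsilon>" "\<bar>s3 - s0\<bar> < \<epsilon>"
    and "c1 = \<gamma> s1" "c2 = \<gamma> s2" "c3 = \<gamma> s3"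
    using c by blast
  then have "s1 \<noteq> s2" "s2 \<noteq> s3" "s1 \<noteq> s3" using \<open>c1 \<noteq> c2\<close> \<open>c1 \<noteq> c3\<close> \<open>c2 \<noteq> c3\<close> by auto
  then obtain a b d where "a < b" "b < d" and abd: "{a, b, d} = {s1, s2, s3}" by (rule distinct_three_sortedE)
  have on: "x \<in> sphere (\<gamma> s) r \<and> \<bar>s - s0\<bar> < \<epsilon>" if "s \<in> {a, b, d}" for s
    using that x s unfolding abd \<open>c1 = \<gamma> s1\<close> \<open>c2 = \<gamma> s2\<close> \<open>c3 = \<gamma> s3\<close> by auto
  show False
  proof (rule no_point_on_three_circles[OF curve tub \<open>a < b\<close> \<open>b < d\<close>])
    show "d - a < L" "r + (d - a) < \<rho>" using on[of a] on[of d] assms(3,4) by auto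
  qed (use on in auto)
qed

lemma infinite_curve_arc:
  assumes curve: "arclength_simple_closed_curve \<gamma> L" and tub: "tubular_radius \<gamma> L \<rho>"
    and "0 < \<epsilon>" "\<epsilon> \<le> L / 2"
  shows "infinite (\<gamma> ` {s. \<bar>s - s0\<bar> < \<epsilon>})"
proof -
  have "inj_on \<gamma> {s. \<bar>s - s0\<bar> < \<epsilon>}"
  proof (rule inj_onI)
    fix z1 z2 assume "z1 \<in> {s. \<bar>s - s0\<bar> < \<epsilon>}" "z2 \<in> {s. \<bar>s - s0\<bar> < \<epsilon>}" "\<gamma> z1 = \<gamma> z2"
    moreover have "\<bar>0\<bar> < \<rho>" using tub unfolding tubular_radius_def by simp
    moreover have "\<bar>z1 - z2\<bar> < L" using calculation(1,2) assms(4) by simp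
    ultimately show "z1 = z2" using tube_map_inj[OF curve tub, of 0 0 z1 z2] by simp
  qed
  moreover have "{s. \<bar>s - s0\<bar> < \<epsilon>} = {s0 - \<epsilon><..<s0 + \<epsilon>}" by (auto simp: abs_less_iff)
  ultimately show ?thesis using assms(3) by (simp add: finite_image_iff)
qed

lemma smooth_on_set_imp_continuous_on:
  assumes "smooth_on_set A F"
  shows "continuous_on A F"
proof -
  obtain U g where "A \<subseteq> U" "smooth_on U g" and "\<forall>x\<in>A. g x = F x"
    using assms unfolding smooth_on_set_def by blast
  have "Ck_on 0 U g" using \<open>smooth_on U g\<close> unfolding smooth_on_def by blast
  then have "continuous_on A g" using \<open>A \<subseteq> U\<close> by (simp add: continuous_on_subset)
  then show ?thesis by (rule continuous_on_eq) (use \<open>\<forall>x\<in>A. g x = F x\<close> in simp)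
qed

lemma circ_eq_sphere: "circ \<gamma> r s = sphere (\<gamma> s) r"
  unfolding circ_def by (auto simp: dist_commute)

text \<open>A point \<open>x\<close> of \<open>C\<^sub>s\<close> is the limit of the points \<open>x + \<gamma> t - \<gamma> s \<in> C\<^sub>t\<close> as \<open>t \<rightarrow> s\<close>.\<close>
lemma continuous_on_Aset_eq_0:
  fixes G :: "real \<times> real \<Rightarrow> real"
  assumes "continuous_on UNIV \<gamma>" "\<epsilon> > 0" and G: "continuous_on (Aset \<gamma> r s0 \<epsilon>) G"
    and zero: "\<And>s x. \<bar>s - s0\<bar> < \<epsilon> \<Longrightarrow> x \<in> sphere (\<gamma> s) r \<Longrightarrow> G x = 0"
    and "x \<in> Aset \<gamma> r s0 \<epsilon>"
  shows "G x = 0"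
proof -
  obtain s where s: "\<bar>s - s0\<bar> \<le> \<epsilon>" "x \<in> sphere (\<gamma> s) r"
    using assms(5) unfolding Aset_def circ_eq_sphere by blast
  define p where "p t = \<gamma> t + (x - \<gamma> s)" for t
  have p_sphere: "p t \<in> sphere (\<gamma> t) r" for t
    using s(2) unfolding p_def by (simp add: dist_norm)
  have "p ` {s0 - \<epsilon>..s0 + \<epsilon>} \<subseteq> Aset \<gamma> r s0 \<epsilon>"
  proof (rule image_subsetI)
    fix t assume "t \<in> {s0 - \<epsilon>..s0 + \<epsilon>}"
    then have "\<bar>t - s0\<bar> \<le> \<epsilon>" by (simp add: abs_le_iff)
    then show "p t \<in> Aset \<gamma> r s0 \<epsilon>" using p_sphere unfolding Aset_def circ_eq_sphere by blast
  qed
  moreover have "continuous_on {s0 - \<epsilon>..s0 + \<epsilon>} p"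
    unfolding p_def by (intro continuous_intros continuous_on_subset[OF assms(1)]) simp
  ultimately have cont: "continuous_on {s0 - \<epsilon>..s0 + \<epsilon>} (G \<circ> p)"
    by (intro continuous_on_compose continuous_on_subset[OF G])
  have closure: "closure {s0 - \<epsilon><..<s0 + \<epsilon>} = {s0 - \<epsilon>..s0 + \<epsilon>}" using assms(2) by simp
  have "(G \<circ> p) t = 0" if "t \<in> {s0 - \<epsilon><..<s0 + \<epsilon>}" for t
  proof -
    have "\<bar>t - s0\<bar> < \<epsilon>" using that by (simp add: abs_less_iff)
    then show ?thesis using zero p_sphere by simp
  qed
  moreover have "s \<in> closure {s0 - \<epsilon><..<s0 + \<epsilon>}" unfolding closure using s(1) by (simp add: abs_le_iff)
  ultimately have "(G \<circ> p) s = 0" using cont unfolding closure[symmetric] by (rule continuous_constant_on_closure[rotated])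
  then show ?thesis unfolding p_def by simp
qed

lemma poly2_on_circle_family:
  assumes "r > 0" "circles_in_general_position r K" "infinite K"
    and local: "\<And>c. c \<in> K \<Longrightarrow> \<exists>Q. is_poly2 N Q \<and> (\<forall>x\<in>sphere c r. F x = Q x)"
  obtains P where "is_poly2 (2 * N) P" "\<And>c x. c \<in> K \<Longrightarrow> x \<in> sphere c r \<Longrightarrow> F x = P x"
proof -
  obtain C where C: "finite C" "card C = N + 1" "C \<subseteq> K"
    using infinite_arbitrarily_large[OF assms(3)] by blast
  have "\<exists>P. is_poly2 (2 * N) P \<and> (\<forall>c. circle_trig_poly N c r P) \<and> (\<forall>c\<in>C. \<forall>x\<in>sphere c r. F x = P x)"
    by (rule circle_interpolation[OF assms(1,2) C(1,3)]) (use C local in auto)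
  then obtain P where P: "is_poly2 (2 * N) P" "\<And>c. circle_trig_poly N c r P"
    "\<And>c x. c \<in> C \<Longrightarrow> x \<in> sphere c r \<Longrightarrow> F x = P x"
    by blast
  have "F x = P x" if cx: "c \<in> K" "x \<in> sphere c r" for c x
  proof (cases "c \<in> C")
    case True
    then show ?thesis using P(3) cx(2) by blast
  next
    case False
    obtain Q where Q: "is_poly2 N Q" "\<And>x. x \<in> sphere c r \<Longrightarrow> F x = Q x" using local[OF cx(1)] by blast
    have "Q x - P x = 0"
    proof (rule circle_trig_poly_vanishes[OF assms(1,2) C(1) _ False _ _ _ cx(2)])
      show "insert c C \<subseteq> K" using cx(1) C(3) by blast
      show "circle_trig_poly N c r (\<lambda>x. Q x - P x)"
        by (intro circle_trig_poly_diff circle_trig_poly_of_poly2 Q(1) P(2))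
      show "N < card C" using C(2) by simp
      show "Q y - P y = 0" if "c' \<in> C" "y \<in> sphere c r" "y \<in> sphere c' r" for c' y
        using Q(2)[OF that(2)] P(3)[OF that(1,3)] by simp
    qed
    then show ?thesis using Q(2)[OF cx(2)] by simp
  qed
  with P(1) that show ?thesis by blast
qed

theorem lemma6p1:
  fixes \<gamma> :: "real \<Rightarrow> real \<times> real" and L r s0 :: real
  assumes curve: "arclength_simple_closed_curve \<gamma> L"
    and r_pos: "r > 0"
    and r_small: "\<exists>\<rho>. tubular_radius \<gamma> L \<rho> \<and> 2 * r < \<rho>"
  shows "\<exists>\<epsilon>0>0. \<forall>\<epsilon>. 0 < \<epsilon> \<and> \<epsilon> < \<epsilon>0 \<longrightarrow>
    (\<forall>(F :: real \<times> real \<Rightarrow> real) (N :: nat).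
       smooth_on_set (Aset \<gamma> r s0 \<epsilon>) F \<and>
       (\<forall>s. \<bar>s - s0\<bar> < \<epsilon> \<longrightarrow>
          (\<exists>Fs. is_poly2 N Fs \<and> (\<forall>x\<in>circ \<gamma> r s. F x = Fs x)))
       \<longrightarrow> (\<exists>P. is_poly2 (2 * N) P \<and> (\<forall>x\<in>Aset \<gamma> r s0 \<epsilon>. F x = P x)))"
proof -
  obtain \<rho> where tub: "tubular_radius \<gamma> L \<rho>" and "2 * r < \<rho>" using r_small by blast
  have "L > 0" using curve unfolding arclength_simple_closed_curve_def by blast
  show ?thesis
  proof (intro exI[of _ "min (L / 2) (r / 2)"] conjI allI impI)
    show "min (L / 2) (r / 2) > 0" using \<open>L > 0\<close> r_pos by simp
    fix \<epsilon> F and N :: nat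
    assume \<epsilon>: "0 < \<epsilon> \<and> \<epsilon> < min (L / 2) (r / 2)" and hyp: "smooth_on_set (Aset \<gamma> r s0 \<epsilon>) F \<and>
      (\<forall>s. \<bar>s - s0\<bar> < \<epsilon> \<longrightarrow> (\<exists>Fs. is_poly2 N Fs \<and> (\<forall>x\<in>circ \<gamma> r s. F x = Fs x)))"
    define K where "K = \<gamma> ` {s. \<bar>s - s0\<bar> < \<epsilon>}"
    have general: "circles_in_general_position r K"
      unfolding K_def using \<epsilon> \<open>2 * r < \<rho>\<close> by (intro curve_circles_in_general_position[OF curve tub]) auto
    have infinite: "infinite K" unfolding K_def using \<epsilon> by (intro infinite_curve_arc[OF curve tub]) auto
    have local: "\<exists>Q. is_poly2 N Q \<and> (\<forall>x\<in>sphere c r. F x = Q x)" if "c \<in> K" for c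
      using hyp that unfolding K_def by (auto simp: circ_eq_sphere)
    obtain P where P: "is_poly2 (2 * N) P" "\<And>c x. c \<in> K \<Longrightarrow> x \<in> sphere c r \<Longrightarrow> F x = P x"
      using poly2_on_circle_family[OF r_pos general infinite local] by blast
    have "F x - P x = 0" if "x \<in> Aset \<gamma> r s0 \<epsilon>" for x
    proof (rule continuous_on_Aset_eq_0[OF arclength_curve_continuous_on[OF curve] _ _ _ that])
      show "continuous_on (Aset \<gamma> r s0 \<epsilon>) (\<lambda>x. F x - P x)"
        using hyp P(1) by (intro continuous_on_diff smooth_on_set_imp_continuous_on is_poly2_continuous_on) auto
      show "F y - P y = 0" if "\<bar>s - s0\<bar> < \<epsilon>" "y \<in> sphere (\<gamma> s) r" for s y
        using P(2)[of "\<gamma> s" y] that unfolding K_def by simp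
    qed (use \<epsilon> in simp)
    then show "\<exists>P. is_poly2 (2 * N) P \<and> (\<forall>x\<in>Aset \<gamma> r s0 \<epsilon>. F x = P x)" using P(1) by auto
  qed
qed

end
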